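(* Let $\mathcal D=\{d_1,\dots,d_s\}$ and $\mathcal H=\{h_1,\dots,h_n\}$ be finite sets, where each hypothesis $h_i$ is a probability distribution $\mathbb P[\cdot\mid h_i]$ on $\mathcal D$, the hypotheses are pairwise distinct as distributions, and the prior $\bm p=(p_1,\dots,p_n)$ on $\mathcal H$ has all $p_i>0$. Consider chained iterated learning with initial hypothesis $\bm h_{\mathrm{init}}=h_1$. Then there is a constant $C>0$ independent of $t,\delta,\varepsilon$ such that for any $0<\delta,\varepsilon<1$, the sample size sequence $$m_t=\frac{8sn^2}{\delta^2}\Bigl(\ln\frac{t}{\varepsilon}+C\Bigr)$$ makes iterated learning $(\delta,\varepsilon)$-self-sustaining: for every $t\ge1$, a random hypothesis $h$ drawn from the posterior $\bm h^t$ of learner $t$ satisfies $d_{TV}(\mathbb P[\cdot\mid h],\mathbb P[\cdot\mid h_1])\le\delta$ with probability at least $1-\varepsilon$.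
   Context: $d_{TV}$ is the total variation distance (half the $\ell_1$-norm of the difference) between distributions on $\mathcal D$. Chained iterated learning: for $\mathbf d=(x_1,\dots,x_m)\in\mathcal D^m$ let $\mathbb P[\mathbf d\mid h]=\prod_{k=1}^m\mathbb P[x_k\mid h]$ and Bayesian posterior $\mathbb P[h_j\mid\mathbf d]=\mathbb P[\mathbf d\mid h_j]p_j/\sum_{k=1}^n\mathbb P[\mathbf d\mid h_k]p_k$. Learner $t\ge1$ picks a hypothesis $h_i$ from the posterior of learner $t-1$ (for $t=1$, from $\bm h_{\mathrm{init}}$), draws $m_t$ i.i.d. samples $\mathbf d\in\mathcal D^{m_t}$ from $h_i$, and forms the posterior $\mathbb P[\cdot\mid\mathbf d]$. The transition probabilities are $P^{|t}_{ij}=\sum_{\mathbf d\in\mathcal D^{m_t}}\mathbb P[h_j\mid\mathbf d]\,\mathbb P[\mathbf d\mid h_i]$, and the (marginal) posterior of learner $t$ is the row vector $\bm h^t=\bm h^{t-1}P^{|t}$ with $\bm h^0=(1,0,\dots,0)$. *)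

theory Defs
  imports Complex_Main
begin

text \<open>Data points are indexed by {..<s} (d_1..d_s), hypotheses by {..<n} (h_1..h_n);
  index 0 is h_1. L i x is the likelihood P[d_x | h_i], p j the prior of h_j.\<close>

definition lik :: "(nat \<Rightarrow> nat \<Rightarrow> real) \<Rightarrow> nat \<Rightarrow> nat list \<Rightarrow> real" where
  "lik L i ds = (\<Prod>x\<leftarrow>ds. L i x)"

definition posterior :: "nat \<Rightarrow> (nat \<Rightarrow> nat \<Rightarrow> real) \<Rightarrow> (nat \<Rightarrow> real) \<Rightarrow> nat list \<Rightarrow> nat \<Rightarrow> real" where
  "posterior n L p ds j = lik L j ds * p j / (\<Sum>k<n. lik L k ds * p k)"

definition samples :: "nat \<Rightarrow> nat \<Rightarrow> nat list set" where
  "samples s m = {ds. set ds \<subseteq> {..<s} \<and> length ds = m}"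

definition trans_prob :: "nat \<Rightarrow> nat \<Rightarrow> (nat \<Rightarrow> nat \<Rightarrow> real) \<Rightarrow> (nat \<Rightarrow> real) \<Rightarrow> nat \<Rightarrow> nat \<Rightarrow> nat \<Rightarrow> real" where
  "trans_prob n s L p m i j = (\<Sum>ds\<in>samples s m. posterior n L p ds j * lik L i ds)"

text \<open>Marginal posterior h^t of learner t, with sample sizes ms t for learner t; h^0 = (1,0,...,0).\<close>
fun hpost :: "nat \<Rightarrow> nat \<Rightarrow> (nat \<Rightarrow> nat \<Rightarrow> real) \<Rightarrow> (nat \<Rightarrow> real) \<Rightarrow> (nat \<Rightarrow> nat) \<Rightarrow> nat \<Rightarrow> nat \<Rightarrow> real" where
  "hpost n s L p ms 0 j = (if j = 0 then 1 else 0)"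
| "hpost n s L p ms (Suc t) j =
     (\<Sum>i<n. hpost n s L p ms t i * trans_prob n s L p (ms (Suc t)) i j)"

definition dTV :: "nat \<Rightarrow> (nat \<Rightarrow> nat \<Rightarrow> real) \<Rightarrow> nat \<Rightarrow> nat \<Rightarrow> real" where
  "dTV s L i k = (1/2) * (\<Sum>x<s. \<bar>L i x - L k x\<bar>)"

end

theory Submission
  imports Defs "HOL-Analysis.Convex"
begin

text \<open>Put \<open>r = \<delta> / n\<close>. As there are only n hypotheses, some interval \<open>(k r, (k + 1) r]\<close>
  with \<open>k \<le> n\<close> contains none of the distances \<open>d\<^sub>T\<^sub>V(h, h\<^sub>1)\<close>; the hypotheses below it
  form a set R within \<delta> of \<open>h\<^sub>1\<close> whose complement is at distance more than r from each
  member. A learner holding \<open>h\<^sub>i \<in> R\<close> passes to \<open>h\<^sub>j \<notin> R\<close> with probability at most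
  \<open>\<surd>(p\<^sub>j / p\<^sub>i) BC(h\<^sub>i, h\<^sub>j)\<^sup>m\<close>, and the Bhattacharyya coefficient satisfies
  \<open>BC \<le> 1 - d\<^sub>T\<^sub>V\<^sup>2 / (2 s) \<le> exp (- d\<^sub>T\<^sub>V\<^sup>2 / (2 s))\<close>. For the given \<open>m\<^sub>t\<close> the escape
  probability of learner t is \<open>O(\<epsilon> / t\<^sup>2)\<close>, and \<open>\<Sum> 1 / t\<^sup>2 \<le> 2\<close> bounds the total mass
  that ever leaves R by \<epsilon> once C is large.\<close>

lemma samples_Suc: "samples s (Suc m) = (\<lambda>(x, ds). x # ds) ` ({..<s} \<times> samples s m)"
  unfolding samples_def by (auto simp: image_iff length_Suc_conv)

lemma sum_samples_prod_list:
  fixes f :: "nat \<Rightarrow> 'a::comm_semiring_1"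
  shows "(\<Sum>ds\<in>samples s m. \<Prod>x\<leftarrow>ds. f x) = (\<Sum>x<s. f x) ^ m"
proof (induction m)
  case 0
  have "samples s 0 = {[]}" by (auto simp: samples_def)
  then show ?case by simp
next
  case (Suc m)
  have inj: "inj_on (\<lambda>(x, ds). x # ds) ({..<s} \<times> samples s m)"
    by (auto simp: inj_on_def)
  have "(\<Sum>ds\<in>samples s (Suc m). \<Prod>x\<leftarrow>ds. f x)
      = (\<Sum>(x, ds)\<in>{..<s} \<times> samples s m. f x * (\<Prod>y\<leftarrow>ds. f y))"
    unfolding samples_Suc sum.reindex[OF inj] by (simp add: case_prod_beta)
  also have "\<dots> = (\<Sum>x<s. f x * (\<Sum>ds\<in>samples s m. \<Prod>y\<leftarrow>ds. f y))"
    by (simp add: sum.cartesian_product[symmetric] sum_distrib_left)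
  also have "\<dots> = (\<Sum>x<s. f x) ^ Suc m"
    using Suc by (simp add: sum_distrib_right[symmetric])
  finally show ?case .
qed

lemma sqrt_lik_mult: "sqrt (lik L i ds * lik L j ds) = (\<Prod>x\<leftarrow>ds. sqrt (L i x * L j x))"
  unfolding lik_def by (induction ds) (auto simp: real_sqrt_mult)

lemma mult_div_le_sqrt_mult:
  fixes a b D :: real
  assumes "0 \<le> a" "0 \<le> b" "a + b \<le> D"
  shows "a * b / D \<le> sqrt (a * b)"
proof (cases "D = 0")
  case False
  have "sqrt (a * b) \<le> D"
    using arith_geo_mean_sqrt[OF assms(1,2)] assms by argo
  then have "sqrt (a * b) * sqrt (a * b) \<le> sqrt (a * b) * D"
    by (rule mult_left_mono) (use assms in simp)
  then show ?thesis
    using False assms by (simp add: divide_le_eq mult.commute)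
qed (use assms in simp)

lemma dTV_commute: "dTV s L i j = dTV s L j i"
  unfolding dTV_def by (simp add: abs_minus_commute)

lemma dTV_triangle: "dTV s L i k \<le> dTV s L i j + dTV s L j k"
proof -
  have "(\<Sum>x<s. \<bar>L i x - L k x\<bar>) \<le> (\<Sum>x<s. \<bar>L i x - L j x\<bar> + \<bar>L j x - L k x\<bar>)"
    by (intro sum_mono) auto
  then show ?thesis unfolding dTV_def by (simp add: sum.distrib)
qed

lemma dTV_self [simp]: "dTV s L i i = 0"
  by (simp add: dTV_def)

lemma sum_inverse_squares_le: "(\<Sum>k=1..t. 1 / (real k)\<^sup>2) \<le> 2 - 2 / (real t + 1)"
proof (induction t)
  case 0
  then show ?case by simp
next
  case (Suc t)
  have "1 / (real t + 1)\<^sup>2 \<le> 2 / ((real t + 1) * (real t + 2))"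
    by (simp add: divide_simps power2_eq_square algebra_simps)
  also have "\<dots> = 2 / (real t + 1) - 2 / (real t + 2)"
    by (simp add: field_simps)
  finally show ?case
    using Suc by (simp add: add.commute)
qed

lemma exp_minus_le_div_square:
  assumes "1 \<le> k" "0 < \<epsilon>" "\<epsilon> < 1" "0 \<le> C" "4 * (ln (real k / \<epsilon>) + C) \<le> y"
  shows "exp (- y) \<le> \<epsilon> * exp (- C) / (real k)\<^sup>2"
proof -
  have "0 \<le> ln (real k)" "ln \<epsilon> < 0"
    using assms by simp_all
  moreover have "ln (real k / \<epsilon>) = ln (real k) - ln \<epsilon>" "ln ((real k)\<^sup>2 / \<epsilon>) = 2 * ln (real k) - ln \<epsilon>"
    using assms by (simp_all add: ln_div ln_realpow)
  ultimately have "ln ((real k)\<^sup>2 / \<epsilon>) + C \<le> y"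
    using assms by argo
  then have "exp (- y) \<le> exp (- (ln ((real k)\<^sup>2 / \<epsilon>) + C))"
    by simp
  also have "\<dots> = exp (- C) / ((real k)\<^sup>2 / \<epsilon>)"
    using assms by (simp add: exp_diff algebra_simps)
  also have "\<dots> = \<epsilon> * exp (- C) / (real k)\<^sup>2"
    using assms by simp
  finally show ?thesis .
qed

lemma sum_exp_sample_size_le:
  fixes ms :: "nat \<Rightarrow> nat"
  assumes "0 < \<delta>" "0 < \<epsilon>" "\<epsilon> < 1" "0 \<le> C" "2 * real n * K \<le> exp C"
    and ms: "\<And>k. 1 \<le> k \<Longrightarrow> 8 * real s * real n ^ 2 / \<delta> ^ 2 * (ln (real k / \<epsilon>) + C) \<le> real (ms k)"
    and "0 < n" "0 < s" "0 \<le> K"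
  shows "(\<Sum>k=1..t. real n * K * exp (- (real (ms k) * (\<delta> / real n)\<^sup>2 / (2 * real s)))) \<le> \<epsilon>"
proof -
  define \<eta> where "\<eta> k = real n * K * exp (- (real (ms k) * (\<delta> / real n)\<^sup>2 / (2 * real s)))" for k
  have "\<eta> k \<le> real n * K * (\<epsilon> * exp (- C) / (real k)\<^sup>2)" if "1 \<le> k" for k
  proof -
    define A where "A = 8 * real s * real n ^ 2 / \<delta> ^ 2"
    define B where "B = (\<delta> / real n)\<^sup>2 / (2 * real s)"
    have "A * B = 4"
      using assms by (simp add: A_def B_def field_simps)
    have "4 * (ln (real k / \<epsilon>) + C) = A * (ln (real k / \<epsilon>) + C) * B"
      by (simp add: \<open>A * B = 4\<close> flip: \<open>A * B = 4\<close> ac_simps)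
    also have "\<dots> \<le> real (ms k) * B"
      using ms[OF that] by (intro mult_right_mono) (auto simp: A_def B_def)
    finally have "4 * (ln (real k / \<epsilon>) + C) \<le> real (ms k) * (\<delta> / real n)\<^sup>2 / (2 * real s)"
      by (simp add: B_def)
    then show ?thesis
      unfolding \<eta>_def using exp_minus_le_div_square[OF that assms(2,3,4)] \<open>0 \<le> K\<close>
      by (intro mult_left_mono) auto
  qed
  then have "(\<Sum>k=1..t. \<eta> k) \<le> (\<Sum>k=1..t. real n * K * \<epsilon> * exp (- C) * (1 / (real k)\<^sup>2))"
    by (intro sum_mono) (simp add: mult.assoc)
  also have "\<dots> = real n * K * \<epsilon> * exp (- C) * (\<Sum>k=1..t. 1 / (real k)\<^sup>2)"
    by (simp add: sum_distrib_left)
  also have "\<dots> \<le> real n * K * \<epsilon> * exp (- C) * 2"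
  proof (rule mult_left_mono)
    show "(\<Sum>k=1..t. 1 / (real k)\<^sup>2) \<le> 2"
      using sum_inverse_squares_le[of t] by (smt (verit) divide_nonneg_nonneg of_nat_0_le_iff)
  qed (use \<open>0 \<le> K\<close> assms in simp)
  also have "\<dots> \<le> \<epsilon>"
    using assms by (simp add: exp_minus field_simps)
  finally have "(\<Sum>k=1..t. \<eta> k) \<le> \<epsilon>" .
  then show ?thesis
    unfolding \<eta>_def .
qed

lemma exists_value_gap:
  fixes d :: "'a \<Rightarrow> real"
  assumes "finite J" "0 < r"
  shows "\<exists>k\<le>card J. \<forall>j\<in>J. d j \<le> real k * r \<or> real (k + 1) * r < d j"
proof (rule ccontr)
  assume "\<not> ?thesis"
  then have hit: "\<exists>j\<in>J. real k * r < d j \<and> d j \<le> real (k + 1) * r" if "k \<le> card J" for k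
    using that by (metis not_le not_less)
  define g where "g j = nat (\<lceil>d j / r\<rceil> - 1)" for j
  have "{..card J} \<subseteq> g ` J"
  proof
    fix k assume "k \<in> {..card J}"
    then obtain j where "j \<in> J" "real k * r < d j" "d j \<le> real (k + 1) * r"
      using hit by auto
    then have "\<lceil>d j / r\<rceil> = int k + 1"
      using \<open>0 < r\<close> by (intro ceiling_unique) (auto simp: field_simps)
    then show "k \<in> g ` J" using \<open>j \<in> J\<close> unfolding g_def by force
  qed
  then have "card {..card J} \<le> card J"
    using card_mono[OF finite_imageI[OF \<open>finite J\<close>]] card_image_le[OF \<open>finite J\<close>] le_trans by blast
  then show False by simp
qed

lemma exists_separated_neighbourhood:
  assumes "0 < n" "0 < r"
  shows "\<exists>R\<subseteq>{..<n}. 0 \<in> R \<and> (\<forall>j\<in>R. dTV s L j 0 \<le> real n * r)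
           \<and> (\<forall>i\<in>R. \<forall>j\<in>{..<n} - R. r < dTV s L i j)"
proof -
  obtain k where k: "k \<le> n"
    and gap: "\<forall>j<n. dTV s L j 0 \<le> real k * r \<or> real (k + 1) * r < dTV s L j 0"
    using exists_value_gap[of "{..<n}" r "\<lambda>j. dTV s L j 0"] assms by auto
  define R where "R = {j. j < n \<and> dTV s L j 0 \<le> real k * r}"
  have "r < dTV s L i j" if "i \<in> R" "j \<in> {..<n} - R" for i j
  proof -
    have "real (k + 1) * r < dTV s L j 0"
      using gap that unfolding R_def by auto
    moreover have "dTV s L j 0 \<le> dTV s L i j + dTV s L i 0"
      using dTV_triangle[of s L j 0 i] dTV_commute[of s L i j] by simp
    ultimately show ?thesis
      using that unfolding R_def by (simp add: algebra_simps)
  qed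
  moreover have "dTV s L j 0 \<le> real n * r" if "j \<in> R" for j
    using that k \<open>0 < r\<close> unfolding R_def
    by (auto intro: order_trans mult_right_mono)
  ultimately show ?thesis
    using assms by (intro exI[of _ R]) (auto simp: R_def)
qed

definition bhattacharyya :: "nat \<Rightarrow> (nat \<Rightarrow> nat \<Rightarrow> real) \<Rightarrow> nat \<Rightarrow> nat \<Rightarrow> real" where
  "bhattacharyya s L i j = (\<Sum>x<s. sqrt (L i x * L j x))"

locale iterated_learning =
  fixes n s :: nat and L :: "nat \<Rightarrow> nat \<Rightarrow> real" and p :: "nat \<Rightarrow> real"
  assumes n_pos: "0 < n"
    and L_nonneg: "\<forall>i<n. \<forall>x<s. 0 \<le> L i x"
    and L_sum: "\<forall>i<n. (\<Sum>x<s. L i x) = 1"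
    and prior_pos: "\<forall>i<n. 0 < p i"
begin

lemma s_pos: "0 < s"
  using L_sum n_pos by (cases s) auto

lemma L_le_1: "i < n \<Longrightarrow> x < s \<Longrightarrow> L i x \<le> 1"
  using member_le_sum[of x "{..<s}" "L i"] L_nonneg L_sum by auto

lemma prior_nonneg: "i < n \<Longrightarrow> 0 \<le> p i"
  using prior_pos by (simp add: less_imp_le)

lemma lik_nonneg: "i < n \<Longrightarrow> ds \<in> samples s m \<Longrightarrow> 0 \<le> lik L i ds"
  unfolding lik_def samples_def using L_nonneg by (induction ds arbitrary: m) auto

lemma sum_lik_samples: "i < n \<Longrightarrow> (\<Sum>ds\<in>samples s m. lik L i ds) = 1"
  unfolding lik_def using sum_samples_prod_list[where f = "L i"] L_sum by simp

lemma evidence_nonneg: "ds \<in> samples s m \<Longrightarrow> 0 \<le> (\<Sum>k<n. lik L k ds * p k)"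
  using lik_nonneg prior_nonneg by (auto intro!: sum_nonneg mult_nonneg_nonneg)

lemma posterior_nonneg: "j < n \<Longrightarrow> ds \<in> samples s m \<Longrightarrow> 0 \<le> posterior n L p ds j"
  unfolding posterior_def using lik_nonneg evidence_nonneg prior_nonneg
  by (auto intro!: divide_nonneg_nonneg mult_nonneg_nonneg)

lemma trans_prob_nonneg: "i < n \<Longrightarrow> j < n \<Longrightarrow> 0 \<le> trans_prob n s L p m i j"
  unfolding trans_prob_def using posterior_nonneg lik_nonneg
  by (auto intro!: sum_nonneg mult_nonneg_nonneg)

text \<open>The posterior sums to 1 unless the evidence vanishes, and then every likelihood does.\<close>
lemma lik_mult_sum_posterior:
  assumes "ds \<in> samples s m" "i < n"
  shows "lik L i ds * (\<Sum>j<n. posterior n L p ds j) = lik L i ds"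
proof (cases "(\<Sum>k<n. lik L k ds * p k) = 0")
  case True
  then have "lik L i ds * p i = 0"
    using assms lik_nonneg prior_nonneg
    by (subst (asm) sum_nonneg_eq_0_iff) (auto intro!: mult_nonneg_nonneg)
  then show ?thesis using assms prior_pos by auto
next
  case False
  then show ?thesis
    unfolding posterior_def by (simp add: sum_divide_distrib[symmetric])
qed

lemma sum_trans_prob: "i < n \<Longrightarrow> (\<Sum>j<n. trans_prob n s L p m i j) = 1"
proof -
  assume i: "i < n"
  have "(\<Sum>j<n. trans_prob n s L p m i j)
      = (\<Sum>ds\<in>samples s m. lik L i ds * (\<Sum>j<n. posterior n L p ds j))"
    unfolding trans_prob_def by (subst sum.swap) (simp add: sum_distrib_left mult.commute)
  also have "\<dots> = (\<Sum>ds\<in>samples s m. lik L i ds)"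
    using lik_mult_sum_posterior i by (intro sum.cong) auto
  finally show ?thesis using sum_lik_samples i by simp
qed

lemma hpost_nonneg: "j < n \<Longrightarrow> 0 \<le> hpost n s L p ms t j"
  by (induction t arbitrary: j) (auto intro!: sum_nonneg mult_nonneg_nonneg trans_prob_nonneg)

lemma sum_hpost: "(\<Sum>j<n. hpost n s L p ms t j) = 1"
proof (induction t)
  case 0
  then show ?case using n_pos by simp
next
  case (Suc t)
  have "(\<Sum>j<n. hpost n s L p ms (Suc t) j)
      = (\<Sum>i<n. hpost n s L p ms t i * (\<Sum>j<n. trans_prob n s L p (ms (Suc t)) i j))"
    by (simp add: sum_distrib_left) (subst sum.swap, simp)
  with Suc show ?case by (simp add: sum_trans_prob)
qed

lemma trans_prob_le_bhattacharyya:
  assumes i: "i < n" and j: "j < n" and "i \<noteq> j"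
  shows "trans_prob n s L p m i j \<le> sqrt (p j / p i) * bhattacharyya s L i j ^ m"
proof -
  have "posterior n L p ds j * lik L i ds \<le> sqrt (p j / p i) * (\<Prod>x\<leftarrow>ds. sqrt (L i x * L j x))"
    if ds: "ds \<in> samples s m" for ds
  proof -
    define a where "a = lik L j ds * p j"
    define b where "b = lik L i ds * p i"
    define D where "D = (\<Sum>k<n. lik L k ds * p k)"
    have ab: "0 \<le> a" "0 \<le> b"
      using i j ds lik_nonneg prior_nonneg by (auto simp: a_def b_def)
    have "a + b = (\<Sum>k\<in>{i, j}. lik L k ds * p k)"
      using \<open>i \<noteq> j\<close> by (simp add: a_def b_def)
    also have "\<dots> \<le> D"
      unfolding D_def using i j ds lik_nonneg prior_nonneg
      by (intro sum_mono2) (auto intro!: mult_nonneg_nonneg)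
    finally have "a + b \<le> D" .
    have "posterior n L p ds j * lik L i ds = a * b / D / p i"
      using prior_pos[rule_format, OF i] by (simp add: posterior_def a_def b_def D_def)
    also have "\<dots> \<le> sqrt (a * b) / p i"
      using mult_div_le_sqrt_mult[OF ab \<open>a + b \<le> D\<close>] prior_nonneg[OF i]
      by (rule divide_right_mono)
    also have "\<dots> = sqrt (a * b / (p i)\<^sup>2)"
      using prior_nonneg[OF i] by (simp add: real_sqrt_divide)
    also have "a * b / (p i)\<^sup>2 = p j / p i * (lik L i ds * lik L j ds)"
      using prior_pos i by (simp add: a_def b_def field_simps power2_eq_square)
    also have "sqrt \<dots> = sqrt (p j / p i) * sqrt (lik L i ds * lik L j ds)"
      by (rule real_sqrt_mult)
    finally show ?thesis by (simp add: sqrt_lik_mult)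
  qed
  then have "trans_prob n s L p m i j
      \<le> (\<Sum>ds\<in>samples s m. sqrt (p j / p i) * (\<Prod>x\<leftarrow>ds. sqrt (L i x * L j x)))"
    unfolding trans_prob_def by (intro sum_mono)
  also have "\<dots> = sqrt (p j / p i) * bhattacharyya s L i j ^ m"
    by (simp add: sum_distrib_left[symmetric] sum_samples_prod_list bhattacharyya_def)
  finally show ?thesis .
qed

lemma bhattacharyya_nonneg: "i < n \<Longrightarrow> j < n \<Longrightarrow> 0 \<le> bhattacharyya s L i j"
  unfolding bhattacharyya_def using L_nonneg by (auto intro!: sum_nonneg)

text \<open>Via the Hellinger distance: \<open>\<bar>L i x - L j x\<bar> \<le> 2 \<bar>\<surd>L i x - \<surd>L j x\<bar>\<close>, and
  \<open>\<Sum>x. (\<surd>L i x - \<surd>L j x)\<^sup>2 = 2 - 2 * bhattacharyya s L i j\<close>.\<close>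
lemma bhattacharyya_le:
  assumes i: "i < n" and j: "j < n"
  shows "bhattacharyya s L i j \<le> 1 - dTV s L i j ^ 2 / (2 * real s)"
proof -
  define u where "u x = sqrt (L i x)" for x
  define v where "v x = sqrt (L j x)" for x
  have uv: "0 \<le> u x" "0 \<le> v x" "u x \<le> 1" "v x \<le> 1" "(u x)\<^sup>2 = L i x" "(v x)\<^sup>2 = L j x"
    "sqrt (L i x * L j x) = u x * v x" if "x < s" for x
    using that L_nonneg i j L_le_1[OF i] L_le_1[OF j] by (auto simp: u_def v_def real_sqrt_mult)
  have hellinger: "(\<Sum>x<s. (u x - v x)\<^sup>2) = 2 - 2 * bhattacharyya s L i j"
  proof -
    have "(\<Sum>x<s. (u x - v x)\<^sup>2) = (\<Sum>x<s. L i x + L j x - 2 * sqrt (L i x * L j x))"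
      using uv by (intro sum.cong) (auto simp: power2_diff)
    also have "\<dots> = 2 - 2 * bhattacharyya s L i j"
      using L_sum i j by (simp add: sum.distrib sum_subtractf bhattacharyya_def sum_distrib_left)
    finally show ?thesis .
  qed
  have "\<bar>L i x - L j x\<bar> \<le> 2 * \<bar>u x - v x\<bar>" if "x < s" for x
  proof -
    have "L i x - L j x = (u x - v x) * (u x + v x)"
      using uv[OF that] by (simp add: algebra_simps power2_eq_square)
    then have "\<bar>L i x - L j x\<bar> = \<bar>u x - v x\<bar> * (u x + v x)"
      using uv[OF that] by (simp add: abs_mult)
    also have "\<dots> \<le> \<bar>u x - v x\<bar> * 2"
      using uv[OF that] by (intro mult_left_mono) auto
    finally show ?thesis by simp
  qed
  then have "(\<Sum>x<s. \<bar>L i x - L j x\<bar>) \<le> (\<Sum>x<s. 2 * \<bar>u x - v x\<bar>)"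
    by (intro sum_mono) simp
  then have "dTV s L i j \<le> (\<Sum>x<s. \<bar>u x - v x\<bar>)"
    unfolding dTV_def by (simp add: sum_distrib_left[symmetric])
  moreover have "0 \<le> dTV s L i j"
    unfolding dTV_def by (simp add: sum_nonneg)
  ultimately have "dTV s L i j ^ 2 \<le> (\<Sum>x<s. \<bar>u x - v x\<bar>)\<^sup>2"
    by (simp add: power_mono)
  also have "\<dots> \<le> (\<Sum>x<s. (u x - v x)\<^sup>2) * real s"
    using sum_squared_le_sum_of_squares[of "\<lambda>x. \<bar>u x - v x\<bar>" "{..<s}"] by simp
  finally show ?thesis
    using hellinger s_pos by (simp add: field_simps)
qed

lemma bhattacharyya_power_le_exp:
  assumes "i < n" "j < n"
  shows "bhattacharyya s L i j ^ m \<le> exp (- (real m * dTV s L i j ^ 2 / (2 * real s)))"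
proof -
  have "bhattacharyya s L i j \<le> exp (- (dTV s L i j ^ 2 / (2 * real s)))"
    using bhattacharyya_le[OF assms] exp_ge_add_one_self[of "- (dTV s L i j ^ 2 / (2 * real s))"]
    by linarith
  then have "bhattacharyya s L i j ^ m \<le> exp (- (dTV s L i j ^ 2 / (2 * real s))) ^ m"
    using bhattacharyya_nonneg[OF assms] by (intro power_mono)
  then show ?thesis
    by (simp flip: exp_of_nat_mult)
qed

lemma sum_trans_prob_le_1: "i < n \<Longrightarrow> J \<subseteq> {..<n} \<Longrightarrow> (\<Sum>j\<in>J. trans_prob n s L p m i j) \<le> 1"
  using sum_mono2[of "{..<n}" J "trans_prob n s L p m i"] trans_prob_nonneg sum_trans_prob by auto

lemma sum_hpost_le_1: "J \<subseteq> {..<n} \<Longrightarrow> (\<Sum>j\<in>J. hpost n s L p ms t j) \<le> 1"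
  using sum_mono2[of "{..<n}" J "hpost n s L p ms t"] hpost_nonneg sum_hpost by auto

text \<open>Rows of the transition matrix sum to 1, so in each step the mass outside R grows by
  at most the largest escape probability from R.\<close>
lemma hpost_outside_le:
  assumes R: "R \<subseteq> {..<n}" "0 \<in> R"
    and escape: "\<And>k i. i \<in> R \<Longrightarrow> (\<Sum>j\<in>{..<n} - R. trans_prob n s L p (ms k) i j) \<le> \<eta> k"
  shows "(\<Sum>j\<in>{..<n} - R. hpost n s L p ms t j) \<le> (\<Sum>k=1..t. \<eta> k)"
proof (induction t)
  case 0
  then show ?case using R by (auto intro!: sum.neutral)
next
  case (Suc t)
  define Out where "Out = {..<n} - R"
  define h where "h i = hpost n s L p ms t i" for i
  define E where "E i = (\<Sum>j\<in>Out. trans_prob n s L p (ms (Suc t)) i j)" for i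
  have E_le_1: "E i \<le> 1" if "i < n" for i
    using sum_trans_prob_le_1[OF that] by (simp add: E_def Out_def)
  have "0 \<le> E 0"
    using n_pos by (auto simp: E_def Out_def intro!: sum_nonneg trans_prob_nonneg)
  also have "E 0 \<le> \<eta> (Suc t)"
    using escape[OF R(2)] by (simp add: E_def Out_def)
  finally have "0 \<le> \<eta> (Suc t)" .
  have inside: "h i * E i \<le> h i * \<eta> (Suc t)" if "i \<in> R" for i
    using escape[OF that] hpost_nonneg R(1) that unfolding h_def E_def Out_def
    by (intro mult_left_mono) auto
  have outside: "h i * E i \<le> h i" if "i \<in> Out" for i
    using E_le_1 hpost_nonneg that by (auto simp: h_def Out_def intro: mult_left_le)
  have "(\<Sum>j\<in>Out. hpost n s L p ms (Suc t) j) = (\<Sum>i<n. h i * E i)"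
    by (simp add: h_def E_def sum_distrib_left) (subst sum.swap, simp)
  also have "\<dots> = (\<Sum>i\<in>R. h i * E i) + (\<Sum>i\<in>Out. h i * E i)"
    using R(1) by (simp add: Out_def sum.subset_diff[of R])
  also have "\<dots> \<le> (\<Sum>i\<in>R. h i * \<eta> (Suc t)) + (\<Sum>i\<in>Out. h i)"
    using inside outside by (intro add_mono sum_mono)
  also have "\<dots> \<le> \<eta> (Suc t) + (\<Sum>i\<in>Out. h i)"
    using mult_right_mono[OF sum_hpost_le_1[OF R(1)] \<open>0 \<le> \<eta> (Suc t)\<close>]
    by (simp add: h_def flip: sum_distrib_right)
  finally show ?case
    using Suc by (simp add: Out_def h_def)
qed

lemma sqrt_prior_ratio_bound_ge_1:
  assumes "\<forall>i<n. \<forall>j<n. sqrt (p j / p i) \<le> K"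
  shows "1 \<le> K"
proof -
  have "sqrt (p 0 / p 0) \<le> K"
    using assms n_pos by blast
  then show ?thesis
    using prior_pos[rule_format, OF n_pos] by simp
qed

lemma escape_prob_le:
  assumes i: "i < n" and J: "J \<subseteq> {..<n}" "\<forall>j\<in>J. r < dTV s L i j" and "0 \<le> r"
    and K: "\<forall>i<n. \<forall>j<n. sqrt (p j / p i) \<le> K"
  shows "(\<Sum>j\<in>J. trans_prob n s L p m i j) \<le> real n * K * exp (- (real m * r\<^sup>2 / (2 * real s)))"
proof -
  define E where "E = exp (- (real m * r\<^sup>2 / (2 * real s)))"
  have "0 \<le> K"
    using sqrt_prior_ratio_bound_ge_1[OF K] by simp
  have "trans_prob n s L p m i j \<le> K * E" if "j \<in> J" for j
  proof -
    have j: "j < n" and "r < dTV s L i j"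
      using J that by auto
    then have "i \<noteq> j" using \<open>0 \<le> r\<close> by auto
    have "bhattacharyya s L i j ^ m \<le> exp (- (real m * dTV s L i j ^ 2 / (2 * real s)))"
      by (rule bhattacharyya_power_le_exp[OF i j])
    also have "\<dots> \<le> E"
      unfolding E_def using \<open>r < dTV s L i j\<close> \<open>0 \<le> r\<close>
      by (auto intro!: divide_right_mono mult_left_mono power_mono)
    finally have "bhattacharyya s L i j ^ m \<le> E" .
    moreover have "sqrt (p j / p i) \<le> K"
      using K i j by blast
    ultimately have "sqrt (p j / p i) * bhattacharyya s L i j ^ m \<le> K * E"
      using \<open>0 \<le> K\<close> bhattacharyya_nonneg[OF i j] by (intro mult_mono) auto
    with trans_prob_le_bhattacharyya[OF i j \<open>i \<noteq> j\<close>, of m] show ?thesis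
      by linarith
  qed
  then have "(\<Sum>j\<in>J. trans_prob n s L p m i j) \<le> real (card J) * (K * E)"
    using sum_mono[of J _ "\<lambda>_. K * E"] by simp
  also have "\<dots> \<le> real n * (K * E)"
    using card_mono[OF _ J(1)] \<open>0 \<le> K\<close> by (intro mult_right_mono) (auto simp: E_def)
  finally show ?thesis by (simp add: E_def mult.assoc)
qed

lemma hpost_near_h1_ge:
  assumes "0 < \<delta>" "0 < \<epsilon>" "\<epsilon> < 1" "0 \<le> C"
    and K: "\<forall>i<n. \<forall>j<n. sqrt (p j / p i) \<le> K" and "2 * real n * K \<le> exp C"
    and ms: "\<And>k. 1 \<le> k \<Longrightarrow> 8 * real s * real n ^ 2 / \<delta> ^ 2 * (ln (real k / \<epsilon>) + C) \<le> real (ms k)"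
  shows "1 - \<epsilon> \<le> (\<Sum>j\<in>{j. j < n \<and> dTV s L j 0 \<le> \<delta>}. hpost n s L p ms t j)"
proof -
  define r where "r = \<delta> / real n"
  have "0 < r" using assms n_pos by (simp add: r_def)
  obtain R where R: "R \<subseteq> {..<n}" "0 \<in> R" "\<forall>j\<in>R. dTV s L j 0 \<le> \<delta>"
    and separated: "\<forall>i\<in>R. \<forall>j\<in>{..<n} - R. r < dTV s L i j"
    using exists_separated_neighbourhood[OF n_pos \<open>0 < r\<close>, of s L] n_pos by (auto simp: r_def)
  define \<eta> where "\<eta> k = real n * K * exp (- (real (ms k) * r\<^sup>2 / (2 * real s)))" for k
  have "0 \<le> K"
    using sqrt_prior_ratio_bound_ge_1[OF K] by simp
  have "(\<Sum>k=1..t. \<eta> k) \<le> \<epsilon>"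
    unfolding \<eta>_def r_def by (rule sum_exp_sample_size_le[OF assms(1-4,6,7) n_pos s_pos \<open>0 \<le> K\<close>])
  have "(\<Sum>j\<in>{..<n} - R. trans_prob n s L p (ms k) i j) \<le> \<eta> k" if "i \<in> R" for k i
    unfolding \<eta>_def using that R(1) separated \<open>0 < r\<close>
    by (intro escape_prob_le[OF _ _ _ _ K]) auto
  then have "(\<Sum>j\<in>{..<n} - R. hpost n s L p ms t j) \<le> \<epsilon>"
    using hpost_outside_le[OF R(1,2)] \<open>(\<Sum>k=1..t. \<eta> k) \<le> \<epsilon>\<close> by (meson order.trans)
  then have "1 - \<epsilon> \<le> (\<Sum>j\<in>R. hpost n s L p ms t j)"
    using sum_hpost[of ms t] sum.subset_diff[OF R(1), of "hpost n s L p ms t"] by simp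
  also have "\<dots> \<le> (\<Sum>j\<in>{j. j < n \<and> dTV s L j 0 \<le> \<delta>}. hpost n s L p ms t j)"
    using R hpost_nonneg by (intro sum_mono2) auto
  finally show ?thesis .
qed

end

theorem theorem2:
  fixes n s :: nat and L :: "nat \<Rightarrow> nat \<Rightarrow> real" and p :: "nat \<Rightarrow> real"
  assumes "n \<ge> 1" and "s \<ge> 1"
    and "\<forall>i<n. \<forall>x<s. L i x \<ge> 0"
    and "\<forall>i<n. (\<Sum>x<s. L i x) = 1"
    and "\<forall>i<n. \<forall>k<n. i \<noteq> k \<longrightarrow> (\<exists>x<s. L i x \<noteq> L k x)"
    and "\<forall>i<n. p i > 0"
    and "(\<Sum>i<n. p i) = 1"
  shows "\<exists>C>0. \<forall>\<delta> \<epsilon>::real. 0 < \<delta> \<and> \<delta> < 1 \<and> 0 < \<epsilon> \<and> \<epsilon> < 1 \<longrightarrow>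
    (let ms = (\<lambda>t. nat \<lceil>8 * real s * real n ^ 2 / \<delta> ^ 2 * (ln (real t / \<epsilon>) + C)\<rceil>)
     in \<forall>t\<ge>1. (\<Sum>j\<in>{j. j < n \<and> dTV s L j 0 \<le> \<delta>}. hpost n s L p ms t j) \<ge> 1 - \<epsilon>)"
proof -
  interpret iterated_learning n s L p
    using assms by unfold_locales auto
  define K where "K = (MAX (i, j)\<in>{..<n} \<times> {..<n}. sqrt (p j / p i))"
  have K: "\<forall>i<n. \<forall>j<n. sqrt (p j / p i) \<le> K"
    unfolding K_def by (auto intro!: Max_ge)
  have "1 \<le> K"
    by (rule sqrt_prior_ratio_bound_ge_1[OF K])
  define C where "C = 2 * real n * K"
  have "0 < C"
    using \<open>1 \<le> K\<close> n_pos by (simp add: C_def)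
  moreover have "2 * real n * K \<le> exp C"
    using exp_ge_add_one_self[of C] unfolding C_def by linarith
  ultimately show ?thesis
  proof (intro exI[of _ C] conjI allI impI)
    fix \<delta> \<epsilon> :: real
    assume "0 < \<delta> \<and> \<delta> < 1 \<and> 0 < \<epsilon> \<and> \<epsilon> < 1"
    then show "let ms = (\<lambda>t. nat \<lceil>8 * real s * real n ^ 2 / \<delta> ^ 2 * (ln (real t / \<epsilon>) + C)\<rceil>)
      in \<forall>t\<ge>1. (\<Sum>j\<in>{j. j < n \<and> dTV s L j 0 \<le> \<delta>}. hpost n s L p ms t j) \<ge> 1 - \<epsilon>"
      unfolding Let_def using K \<open>0 < C\<close> \<open>2 * real n * K \<le> exp C\<close>
      by (intro allI impI hpost_near_h1_ge) (auto intro: real_nat_ceiling_ge)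
  qed
qed

end
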